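(* Let $\mathcal H=(V,E)$ be a hypergraph with splitting functions and let $R\subseteq V$ with $\mathrm{vol}(R)>0$ and $\mathrm{vol}(\bar R)>0$. Let $\varepsilon\ge\varepsilon_0=\mathrm{vol}(R)/\mathrm{vol}(\bar R)$. Then for every $S\subseteq V$ with $\Omega_{R,\varepsilon}(S)>0$, we have $\mathrm{vol}(S)>0$, $\mathrm{vol}(\bar S)>0$, and $$\frac{\mathrm{vol}(\bar R)}{\mathrm{vol}(V)}\,\mathrm{ncut}(S)\le\mathrm{HLC}(S).$$
   Context: A hypergraph $\mathcal H=(V,E)$ has a finite node set $V$, and each hyperedge $e\in E$ is a subset of $V$. Each hyperedge $e$ carries a splitting function $w_e:2^e\to\mathbb R_{\ge0}$ satisfying $w_e(A)=w_e(e\setminus A)$ for all $A\subseteq e$ and $w_e(\emptyset)=w_e(e)=0$. For $S\subseteq V$, $\mathrm{cut}_{\mathcal H}(S)=\sum_{e\in E}w_e(e\cap S)$. The degree of $v$ is $d_v=\sum_{e\ni v}w_e(\{v\})$, and $\mathrm{vol}(S)=\sum_{v\in S}d_v$. Write $\bar S=V\setminus S$. Hypergraph normalized cut is $\mathrm{ncut}(S)=\frac{\mathrm{cut}_{\mathcal H}(S)}{\mathrm{vol}(S)}+\frac{\mathrm{cut}_{\mathcal H}(\bar S)}{\mathrm{vol}(\bar S)}$. Define $\Omega_{R,\varepsilon}(S)=\mathrm{vol}(S\cap R)-\varepsilon\,\mathrm{vol}(S\cap\bar R)$. Set $\mathrm{HLC}(S)=\mathrm{cut}_{\mathcal H}(S)/\Omega_{R,\varepsilon}(S)$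 if $\Omega_{R,\varepsilon}(S)>0$, and $\mathrm{HLC}(S)=\infty$ otherwise. *)

theory Defs
  imports Main "HOL-Library.Extended_Real"
begin

definition hypergraph_sf ::
  "'a set \<Rightarrow> 'e set \<Rightarrow> ('e \<Rightarrow> 'a set) \<Rightarrow> ('e \<Rightarrow> 'a set \<Rightarrow> real) \<Rightarrow> bool" where
  "hypergraph_sf V E edge w \<longleftrightarrow>
     finite V \<and> finite E \<and>
     (\<forall>e\<in>E. edge e \<subseteq> V) \<and>
     (\<forall>e\<in>E. \<forall>A. A \<subseteq> edge e \<longrightarrow> w e A \<ge> 0) \<and>
     (\<forall>e\<in>E. \<forall>A. A \<subseteq> edge e \<longrightarrow> w e A = w e (edge e - A)) \<and>
     (\<forall>e\<in>E. w e {} = 0 \<and> w e (edge e) = 0)"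

definition hcut :: "'e set \<Rightarrow> ('e \<Rightarrow> 'a set) \<Rightarrow> ('e \<Rightarrow> 'a set \<Rightarrow> real) \<Rightarrow> 'a set \<Rightarrow> real" where
  "hcut E edge w S = (\<Sum>e\<in>E. w e (edge e \<inter> S))"

definition hdeg :: "'e set \<Rightarrow> ('e \<Rightarrow> 'a set) \<Rightarrow> ('e \<Rightarrow> 'a set \<Rightarrow> real) \<Rightarrow> 'a \<Rightarrow> real" where
  "hdeg E edge w v = (\<Sum>e\<in>{e\<in>E. v \<in> edge e}. w e {v})"

definition hvol :: "'e set \<Rightarrow> ('e \<Rightarrow> 'a set) \<Rightarrow> ('e \<Rightarrow> 'a set \<Rightarrow> real) \<Rightarrow> 'a set \<Rightarrow> real" where
  "hvol E edge w S = (\<Sum>v\<in>S. hdeg E edge w v)"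

definition ncut :: "'a set \<Rightarrow> 'e set \<Rightarrow> ('e \<Rightarrow> 'a set) \<Rightarrow> ('e \<Rightarrow> 'a set \<Rightarrow> real) \<Rightarrow> 'a set \<Rightarrow> real" where
  "ncut V E edge w S =
     hcut E edge w S / hvol E edge w S + hcut E edge w (V - S) / hvol E edge w (V - S)"

definition Omega :: "'a set \<Rightarrow> 'e set \<Rightarrow> ('e \<Rightarrow> 'a set) \<Rightarrow> ('e \<Rightarrow> 'a set \<Rightarrow> real)
    \<Rightarrow> 'a set \<Rightarrow> real \<Rightarrow> 'a set \<Rightarrow> real" where
  "Omega V E edge w R \<epsilon> S = hvol E edge w (S \<inter> R) - \<epsilon> * hvol E edge w (S \<inter> (V - R))"

definition HLC :: "'a set \<Rightarrow> 'e set \<Rightarrow> ('e \<Rightarrow> 'a set) \<Rightarrow> ('e \<Rightarrow> 'a set \<Rightarrow> real)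
    \<Rightarrow> 'a set \<Rightarrow> real \<Rightarrow> 'a set \<Rightarrow> ereal" where
  "HLC V E edge w R \<epsilon> S =
     (if Omega V E edge w R \<epsilon> S > 0
      then ereal (hcut E edge w S / Omega V E edge w R \<epsilon> S) else \<infinity>)"

end

theory Submission
  imports Defs
begin

text \<open>Split the volumes along \<open>R\<close> and \<open>S\<close>: with \<open>a = vol(S \<inter> R)\<close>, \<open>b = vol(S - R)\<close>,
\<open>c = vol(S\<^sup>c \<inter> R)\<close>, \<open>d = vol(S\<^sup>c - R)\<close> the hypothesis on \<open>\<epsilon>\<close> reads \<open>a + c \<le> \<epsilon> (b + d)\<close>, and
then \<open>vol(R\<^sup>c) \<Omega>(S) = (b + d)(a - \<epsilon> b) \<le> a d - b c \<le> vol(S) vol(S\<^sup>c)\<close>.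
Since \<open>\<Omega>(S) > 0\<close>, both volumes are positive. Finally the cut is symmetric, so
\<open>ncut(S) = cut(S) vol(V) / (vol(S) vol(S\<^sup>c))\<close>, and the product bound is exactly the claim.\<close>

lemma mult_diff_le_mult_of_sum_le:
  fixes a b c d \<epsilon> :: real
  assumes "a \<ge> 0" "b \<ge> 0" "c \<ge> 0" "d \<ge> 0" and "a + c \<le> \<epsilon> * (b + d)"
  shows "(b + d) * (a - \<epsilon> * b) \<le> (a + b) * (c + d)"
proof -
  have "(b + d) * (a - \<epsilon> * b) = (b + d) * a - b * (\<epsilon> * (b + d))"
    by (simp add: algebra_simps)
  also have "\<dots> \<le> (b + d) * a - b * (a + c)"
    using mult_left_mono[OF assms(5,2)] by simp
  also have "\<dots> \<le> (a + b) * (c + d)"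
    using assms by (simp add: algebra_simps)
  finally show ?thesis .
qed

lemma scaled_sum_of_quotients_le:
  fixes C r p q \<Omega> :: real
  assumes "C \<ge> 0" "p > 0" "q > 0" "\<Omega> > 0" and "r * \<Omega> \<le> p * q"
  shows "r / (p + q) * (C / p + C / q) \<le> C / \<Omega>"
proof -
  have "r / (p * q) \<le> 1 / \<Omega>"
    using assms(2-5) by (simp add: divide_simps mult.commute)
  have "C / p + C / q = C * (p + q) / (p * q)"
    using assms(2,3) by (simp add: field_simps)
  then have "r / (p + q) * (C / p + C / q) = C * (r / (p * q))"
    using assms(2,3) by simp
  also have "\<dots> \<le> C * (1 / \<Omega>)"
    using \<open>r / (p * q) \<le> 1 / \<Omega>\<close> assms(1) by (rule mult_left_mono)
  finally show ?thesis by simp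
qed

lemma hypergraph_sfD:
  assumes "hypergraph_sf V E edge w"
  shows "finite V"
    and "e \<in> E \<Longrightarrow> edge e \<subseteq> V"
    and "e \<in> E \<Longrightarrow> A \<subseteq> edge e \<Longrightarrow> w e A \<ge> 0"
    and "e \<in> E \<Longrightarrow> A \<subseteq> edge e \<Longrightarrow> w e A = w e (edge e - A)"
  using assms unfolding hypergraph_sf_def by meson+

lemma hcut_nonneg:
  assumes "hypergraph_sf V E edge w"
  shows "hcut E edge w S \<ge> 0"
  unfolding hcut_def by (intro sum_nonneg hypergraph_sfD(3)[OF assms]) auto

lemma hvol_nonneg:
  assumes "hypergraph_sf V E edge w"
  shows "hvol E edge w S \<ge> 0"
  unfolding hvol_def hdeg_def by (intro sum_nonneg hypergraph_sfD(3)[OF assms]) auto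

lemma hvol_Int_Diff:
  assumes "finite A"
  shows "hvol E edge w A = hvol E edge w (A \<inter> B) + hvol E edge w (A - B)"
  unfolding hvol_def using sum.Int_Diff[OF assms] .

lemma hcut_Diff:
  assumes H: "hypergraph_sf V E edge w"
  shows "hcut E edge w (V - S) = hcut E edge w S"
  unfolding hcut_def
proof (rule sum.cong[OF refl])
  fix e assume "e \<in> E"
  then have "edge e \<inter> (V - S) = edge e - edge e \<inter> S"
    using hypergraph_sfD(2)[OF H] by blast
  with \<open>e \<in> E\<close> show "w e (edge e \<inter> (V - S)) = w e (edge e \<inter> S)"
    using hypergraph_sfD(4)[OF H, of e "edge e \<inter> S"] by simp
qed

lemma hvol_Diff_mult_Omega_le:
  assumes H: "hypergraph_sf V E edge w" and "R \<subseteq> V" "S \<subseteq> V"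
    and eps: "hvol E edge w R \<le> \<epsilon> * hvol E edge w (V - R)"
  shows "hvol E edge w (V - R) * Omega V E edge w R \<epsilon> S
           \<le> hvol E edge w S * hvol E edge w (V - S)"
proof -
  let ?vol = "hvol E edge w"
  have fin: "finite X" if "X \<subseteq> V" for X
    using hypergraph_sfD(1)[OF H] that by (rule finite_subset[rotated])
  have vS: "?vol S = ?vol (S \<inter> R) + ?vol (S - R)"
    and vSc: "?vol (V - S) = ?vol ((V - S) \<inter> R) + ?vol ((V - S) - R)"
    and vR: "?vol R = ?vol (R \<inter> S) + ?vol (R - S)"
    and vRc: "?vol (V - R) = ?vol ((V - R) \<inter> S) + ?vol ((V - R) - S)"
    using fin assms(2,3) by (auto intro!: hvol_Int_Diff)
  have "R \<inter> S = S \<inter> R" "R - S = (V - S) \<inter> R" "(V - R) \<inter> S = S - R"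
    "(V - R) - S = (V - S) - R" "S \<inter> (V - R) = S - R"
    using assms(2,3) by auto
  with vR vRc eps have "?vol (S \<inter> R) + ?vol ((V - S) \<inter> R)
      \<le> \<epsilon> * (?vol (S - R) + ?vol ((V - S) - R))"
    and "Omega V E edge w R \<epsilon> S = ?vol (S \<inter> R) - \<epsilon> * ?vol (S - R)"
    unfolding Omega_def by simp_all
  with mult_diff_le_mult_of_sum_le[OF hvol_nonneg[OF H] hvol_nonneg[OF H]
      hvol_nonneg[OF H] hvol_nonneg[OF H]]
  show ?thesis
    unfolding vS vSc \<open>(V - R) \<inter> S = S - R\<close> \<open>(V - R) - S = (V - S) - R\<close> vRc by simp
qed

theorem mainTheorem8:
  fixes V :: "'a set" and E :: "'e set" and edge :: "'e \<Rightarrow> 'a set"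
    and w :: "'e \<Rightarrow> 'a set \<Rightarrow> real" and R :: "'a set" and \<epsilon> :: real
  assumes H: "hypergraph_sf V E edge w"
    and RV: "R \<subseteq> V"
    and "hvol E edge w R > 0"
    and volRc: "hvol E edge w (V - R) > 0"
    and eps: "\<epsilon> \<ge> hvol E edge w R / hvol E edge w (V - R)"
  shows "\<forall>S. S \<subseteq> V \<and> Omega V E edge w R \<epsilon> S > 0 \<longrightarrow>
           hvol E edge w S > 0 \<and> hvol E edge w (V - S) > 0 \<and>
           ereal (hvol E edge w (V - R) / hvol E edge w V * ncut V E edge w S)
             \<le> HLC V E edge w R \<epsilon> S"
proof (intro allI impI, elim conjE)
  fix S assume SV: "S \<subseteq> V" and Om: "Omega V E edge w R \<epsilon> S > 0"
  let ?vol = "hvol E edge w"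
  have prod: "?vol (V - R) * Omega V E edge w R \<epsilon> S \<le> ?vol S * ?vol (V - S)"
    using eps volRc by (intro hvol_Diff_mult_Omega_le[OF H RV SV]) (simp add: pos_divide_le_eq)
  moreover have "?vol (V - R) * Omega V E edge w R \<epsilon> S > 0"
    using volRc Om by simp
  ultimately have "?vol S * ?vol (V - S) > 0"
    by linarith
  then have pos: "?vol S > 0" "?vol (V - S) > 0"
    using hvol_nonneg[OF H, of S] hvol_nonneg[OF H, of "V - S"] zero_less_mult_iff by fastforce+
  have "?vol V = ?vol S + ?vol (V - S)"
    using hypergraph_sfD(1)[OF H] SV hvol_Int_Diff[of V E edge w S] by (simp add: Int_absorb1)
  then have "?vol (V - R) / ?vol V * ncut V E edge w S
      \<le> hcut E edge w S / Omega V E edge w R \<epsilon> S"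
    unfolding ncut_def hcut_Diff[OF H]
    using scaled_sum_of_quotients_le[OF hcut_nonneg[OF H] pos Om prod] by simp
  with pos Om show "?vol S > 0 \<and> ?vol (V - S) > 0 \<and>
      ereal (?vol (V - R) / ?vol V * ncut V E edge w S) \<le> HLC V E edge w R \<epsilon> S"
    unfolding HLC_def by simp
qed

end
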